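(* Let $q \in C^1(\mathbb{R}^n,\mathbb{R})$ be a scalar function, and let $A$, $B$ and $D$ be linear differential operators with constant coefficients on functions $\mathbb{R}^n\to\mathbb{R}$ with $D = A + B$. Suppose there exist a non-zero real number $u$, a natural number $\lambda$ and a sufficiently smooth function $W:\mathbb{R}^n\to\mathbb{R}$ such that $$A^{\lambda+1} W(\mathbf{x}) = q(\mathbf{x}) \quad\text{(integration condition)},\qquad B^{\lambda+1} W(\mathbf{x}) = (-1)^\lambda (u-1)\, q(\mathbf{x}) \quad\text{(relaxed annihilator condition)}.$$ Define $$Q(\mathbf{x}) := \sum_{p=0}^{\lambda} \frac{(-1)^p}{u} A^{\lambda-p} B^p W(\mathbf{x}).$$ Then $D Q = q$.
   Context: Powers of operators denote repeated application, with $A^0$, $B^0$ the identity. *)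

theory Defs
  imports "HOL-Analysis.Analysis"
begin

type_synonym 'n rfun = "real^'n \<Rightarrow> real"

definition partial :: "'n::finite \<Rightarrow> 'n rfun \<Rightarrow> 'n rfun" where
  "partial i f = (\<lambda>x. deriv (\<lambda>t. f (x + t *\<^sub>R axis i 1)) 0)"

text \<open>Linear differential operators with constant coefficients: the operators
  generated from the identity and the partial derivatives by real scalar
  multiples, sums and compositions (i.e. polynomials in the partials).\<close>
inductive_set const_coeff_diff_op :: "('n::finite rfun \<Rightarrow> 'n rfun) set" where
  cc_id: "(\<lambda>f. f) \<in> const_coeff_diff_op"
| cc_partial: "partial i \<in> const_coeff_diff_op"
| cc_scale: "L \<in> const_coeff_diff_op \<Longrightarrow> (\<lambda>f x. c * L f x) \<in> const_coeff_diff_op"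
| cc_add: "L \<in> const_coeff_diff_op \<Longrightarrow> M \<in> const_coeff_diff_op \<Longrightarrow>
      (\<lambda>f x. L f x + M f x) \<in> const_coeff_diff_op"
| cc_comp: "L \<in> const_coeff_diff_op \<Longrightarrow> M \<in> const_coeff_diff_op \<Longrightarrow>
      (\<lambda>f. L (M f)) \<in> const_coeff_diff_op"

definition C1_fun :: "'n::finite rfun \<Rightarrow> bool" where
  "C1_fun f \<longleftrightarrow> f differentiable_on UNIV \<and> (\<forall>i. continuous_on UNIV (partial i f))"

definition smooth_fun :: "'n::finite rfun \<Rightarrow> bool" where
  "smooth_fun f \<longleftrightarrow> (\<forall>is. (foldr partial is f) differentiable_on UNIV)"

end

theory Submission
  imports Defs
begin

text \<open>Partial derivatives of smooth functions commute (Schwarz), so constant-coefficient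
  operators act linearly on smooth functions and commute with one another. Writing
  \<open>T\<^sub>p = A\<^bsup>\<lambda>-p\<^esup> B\<^bsup>p\<^esup> W\<close> and \<open>X\<^sub>p = A\<^bsup>\<lambda>+1-p\<^esup> B\<^bsup>p\<^esup> W\<close>,
  we get \<open>A T\<^sub>p = X\<^sub>p\<close> and \<open>B T\<^sub>p = X\<^sub>p\<^sub>+\<^sub>1\<close>, so
  \<open>(A + B) \<Sum>\<^sub>p (-1)\<^sup>p T\<^sub>p\<close> telescopes to \<open>X\<^sub>0 + (-1)\<^sup>\<lambda> X\<^sub>\<lambda>\<^sub>+\<^sub>1 = q + (u - 1) q = u q\<close>.\<close>

lemma has_real_derivative_along_line:
  fixes f :: "'a::real_normed_vector \<Rightarrow> real"
  assumes "(f has_derivative f') (at (y + t *\<^sub>R e))"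
  shows "((\<lambda>s. f (y + s *\<^sub>R e)) has_real_derivative f' e) (at t)"
proof -
  have "((\<lambda>s. y + s *\<^sub>R e) has_derivative (\<lambda>h. h *\<^sub>R e)) (at t)"
    by (auto intro!: derivative_eq_intros)
  from has_derivative_compose[OF this assms]
  have "((\<lambda>s. f (y + s *\<^sub>R e)) has_derivative (\<lambda>h. f' (h *\<^sub>R e))) (at t)"
    by (simp add: o_def)
  moreover have "(\<lambda>h. f' (h *\<^sub>R e)) = (*) (f' e)"
    using has_derivative_linear[OF assms] by (auto simp: linear_scale fun_eq_iff)
  ultimately show ?thesis
    by (simp add: has_field_derivative_def)
qed

lemma has_real_derivative_partial:
  fixes f :: "real^'n::finite \<Rightarrow> real"
  assumes "f differentiable (at (y + t *\<^sub>R axis i 1))"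
  shows "((\<lambda>s. f (y + s *\<^sub>R axis i 1)) has_real_derivative partial i f (y + t *\<^sub>R axis i 1)) (at t)"
proof -
  obtain f' where f': "(f has_derivative f') (at (y + t *\<^sub>R axis i 1))"
    using assms differentiable_def by blast
  have "((\<lambda>s. f ((y + t *\<^sub>R axis i 1) + s *\<^sub>R axis i 1)) has_real_derivative f' (axis i 1)) (at 0)"
    by (rule has_real_derivative_along_line) (use f' in simp)
  then have "partial i f (y + t *\<^sub>R axis i 1) = f' (axis i 1)"
    unfolding partial_def by (rule DERIV_imp_deriv)
  with has_real_derivative_along_line[OF f'] show ?thesis
    by simp
qed

lemma partial_add:
  assumes "\<And>z. f differentiable (at z)" and "\<And>z. g differentiable (at z)"
  shows "partial i (\<lambda>x. f x + g x) = (\<lambda>x. partial i f x + partial i g x)"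
proof
  fix z
  have "((\<lambda>s. f (z + s *\<^sub>R axis i 1) + g (z + s *\<^sub>R axis i 1)) has_real_derivative
      partial i f (z + 0 *\<^sub>R axis i 1) + partial i g (z + 0 *\<^sub>R axis i 1)) (at 0)"
    by (intro DERIV_add has_real_derivative_partial assms)
  then show "partial i (\<lambda>x. f x + g x) z = partial i f z + partial i g z"
    unfolding partial_def[of i "\<lambda>x. f x + g x"] by (simp add: DERIV_imp_deriv)
qed

lemma partial_cmult:
  assumes "\<And>z. f differentiable (at z)"
  shows "partial i (\<lambda>x. c * f x) = (\<lambda>x. c * partial i f x)"
proof
  fix z
  have "((\<lambda>s. c * f (z + s *\<^sub>R axis i 1)) has_real_derivative
      c * partial i f (z + 0 *\<^sub>R axis i 1)) (at 0)"
    by (intro DERIV_cmult has_real_derivative_partial assms)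
  then show "partial i (\<lambda>x. c * f x) z = c * partial i f z"
    unfolding partial_def[of i "\<lambda>x. c * f x"] by (simp add: DERIV_imp_deriv)
qed

lemma second_difference_mvt:
  fixes f :: "real^'n::finite \<Rightarrow> real"
  assumes f: "\<And>z. f differentiable (at z)" and fi: "\<And>z. partial i f differentiable (at z)"
    and "h > 0"
  obtains y where "dist y x < 2 * h"
    "f (x + h *\<^sub>R axis i 1 + h *\<^sub>R axis j 1) - f (x + h *\<^sub>R axis i 1) - f (x + h *\<^sub>R axis j 1) + f x
       = h * h * partial j (partial i f) y"
proof -
  define ei where "ei = (axis i 1 :: real^'n)"
  define ej where "ej = (axis j 1 :: real^'n)"
  define G where "G s = f ((x + h *\<^sub>R ej) + s *\<^sub>R ei) - f (x + s *\<^sub>R ei)" for s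
  have "\<exists>s. 0 < s \<and> s < h \<and>
      G h - G 0 = (h - 0) * (partial i f ((x + h *\<^sub>R ej) + s *\<^sub>R ei) - partial i f (x + s *\<^sub>R ei))"
    unfolding G_def ei_def by (rule MVT2[OF \<open>h > 0\<close>]) (intro DERIV_diff has_real_derivative_partial f)
  then obtain s where s: "0 < s" "s < h"
    and Gs: "G h - G 0 = h * (partial i f ((x + h *\<^sub>R ej) + s *\<^sub>R ei) - partial i f (x + s *\<^sub>R ei))"
    by auto
  define H where "H t = partial i f ((x + s *\<^sub>R ei) + t *\<^sub>R ej)" for t
  have "\<exists>t. 0 < t \<and> t < h \<and> H h - H 0 = (h - 0) * partial j (partial i f) ((x + s *\<^sub>R ei) + t *\<^sub>R ej)"
    unfolding H_def ej_def by (rule MVT2[OF \<open>h > 0\<close>]) (intro has_real_derivative_partial fi)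
  then obtain t where t: "0 < t" "t < h"
    and Ht: "H h - H 0 = h * partial j (partial i f) ((x + s *\<^sub>R ei) + t *\<^sub>R ej)"
    by auto
  have "dist (x + s *\<^sub>R ei + t *\<^sub>R ej) x \<le> norm (s *\<^sub>R ei) + norm (t *\<^sub>R ej)"
    unfolding dist_norm by (simp add: norm_triangle_ineq del: norm_scaleR)
  then have "dist (x + s *\<^sub>R ei + t *\<^sub>R ej) x < 2 * h"
    using s t by (simp add: ei_def ej_def)
  moreover have "G h - G 0 = h * (H h - H 0)"
    using Gs unfolding H_def by (simp add: algebra_simps)
  moreover have "G h - G 0 = f (x + h *\<^sub>R ei + h *\<^sub>R ej) - f (x + h *\<^sub>R ei) - f (x + h *\<^sub>R ej) + f x"
    unfolding G_def by (simp add: algebra_simps)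
  ultimately show ?thesis
    using that Ht unfolding ei_def ej_def by simp
qed

lemma mixed_partials_eq:
  fixes f :: "real^'n::finite \<Rightarrow> real"
  assumes f: "\<And>z. f differentiable (at z)"
    and fi: "\<And>z. partial i f differentiable (at z)"
    and fj: "\<And>z. partial j f differentiable (at z)"
    and cont_ij: "continuous (at x) (partial j (partial i f))"
    and cont_ji: "continuous (at x) (partial i (partial j f))"
  shows "partial j (partial i f) x = partial i (partial j f) x"
proof -
  define M1 where "M1 = partial j (partial i f)"
  define M2 where "M2 = partial i (partial j f)"
  have approx: "\<bar>M1 x - M2 x\<bar> < 2 * \<epsilon>" if "\<epsilon> > 0" for \<epsilon>
  proof -
    obtain d1 where "d1 > 0" and d1: "\<And>y. dist y x < d1 \<Longrightarrow> dist (M1 y) (M1 x) < \<epsilon>"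
      using cont_ij \<open>\<epsilon> > 0\<close> unfolding M1_def continuous_at_eps_delta by blast
    obtain d2 where "d2 > 0" and d2: "\<And>y. dist y x < d2 \<Longrightarrow> dist (M2 y) (M2 x) < \<epsilon>"
      using cont_ji \<open>\<epsilon> > 0\<close> unfolding M2_def continuous_at_eps_delta by blast
    define h where "h = min d1 d2 / 2"
    have "h > 0"
      using \<open>d1 > 0\<close> \<open>d2 > 0\<close> by (simp add: h_def)
    obtain y1 where "dist y1 x < 2 * h" and y1:
      "f (x + h *\<^sub>R axis i 1 + h *\<^sub>R axis j 1) - f (x + h *\<^sub>R axis i 1) - f (x + h *\<^sub>R axis j 1) + f x
        = h * h * M1 y1"
      using second_difference_mvt[OF f fi \<open>h > 0\<close>] unfolding M1_def by blast
    obtain y2 where "dist y2 x < 2 * h" and y2: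
      "f (x + h *\<^sub>R axis j 1 + h *\<^sub>R axis i 1) - f (x + h *\<^sub>R axis j 1) - f (x + h *\<^sub>R axis i 1) + f x
        = h * h * M2 y2"
      using second_difference_mvt[OF f fj \<open>h > 0\<close>] unfolding M2_def by blast
    have "M1 y1 = M2 y2"
      using y1 y2 \<open>h > 0\<close> by (simp add: algebra_simps)
    moreover have "dist (M1 y1) (M1 x) < \<epsilon>" and "dist (M2 y2) (M2 x) < \<epsilon>"
      using d1 d2 \<open>dist y1 x < 2 * h\<close> \<open>dist y2 x < 2 * h\<close> by (simp_all add: h_def)
    ultimately show ?thesis
      by (simp add: dist_real_def)
  qed
  show ?thesis
  proof (rule ccontr)
    assume "partial j (partial i f) x \<noteq> partial i (partial j f) x"
    then have "\<bar>M1 x - M2 x\<bar> > 0"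
      by (simp add: M1_def M2_def)
    with approx[of "\<bar>M1 x - M2 x\<bar> / 2"] show False
      by simp
  qed
qed

lemma smooth_fun_imp_differentiable: "smooth_fun f \<Longrightarrow> f differentiable (at z)"
  unfolding smooth_fun_def by (metis foldr_Nil id_apply differentiable_on_def UNIV_I at_within_open open_UNIV)

lemma smooth_fun_foldr_partial: "smooth_fun f \<Longrightarrow> smooth_fun (foldr partial is f)"
  unfolding smooth_fun_def by (metis foldr_append)

lemma smooth_fun_partial: "smooth_fun f \<Longrightarrow> smooth_fun (partial i f)"
  using smooth_fun_foldr_partial[of f "[i]"] by simp

lemma foldr_partial_add:
  assumes "smooth_fun f" and "smooth_fun g"
  shows "foldr partial is (\<lambda>x. f x + g x) = (\<lambda>x. foldr partial is f x + foldr partial is g x)"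
  by (induction "is") (simp_all add: partial_add smooth_fun_imp_differentiable smooth_fun_foldr_partial assms)

lemma foldr_partial_cmult:
  assumes "smooth_fun f"
  shows "foldr partial is (\<lambda>x. c * f x) = (\<lambda>x. c * foldr partial is f x)"
  by (induction "is") (simp_all add: partial_cmult smooth_fun_imp_differentiable smooth_fun_foldr_partial assms)

lemma smooth_fun_add: "smooth_fun f \<Longrightarrow> smooth_fun g \<Longrightarrow> smooth_fun (\<lambda>x. f x + g x)"
  by (simp add: smooth_fun_def foldr_partial_add)

lemma smooth_fun_cmult: "smooth_fun f \<Longrightarrow> smooth_fun (\<lambda>x. c * f x)"
  by (simp add: smooth_fun_def foldr_partial_cmult)

lemma smooth_fun_zero: "smooth_fun (\<lambda>x::real^'n::finite. 0)"
proof -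
  have "foldr partial is (\<lambda>x::real^'n. 0) = (\<lambda>x. 0)" for "is"
    by (induction "is") (simp_all add: partial_def)
  then show ?thesis
    by (simp add: smooth_fun_def)
qed

lemma smooth_fun_sum:
  assumes "\<And>p. p \<in> S \<Longrightarrow> smooth_fun (f p)"
  shows "smooth_fun (\<lambda>x. \<Sum>p\<in>S. c p * f p x)"
  using assms
  by (induction S rule: infinite_finite_induct) (simp_all add: smooth_fun_zero smooth_fun_add smooth_fun_cmult)

lemma partial_commute: "smooth_fun f \<Longrightarrow> partial j (partial i f) = partial i (partial j f)"
  by (intro ext mixed_partials_eq differentiable_imp_continuous_within)
    (auto intro!: smooth_fun_imp_differentiable smooth_fun_partial)

lemma const_coeff_diff_op_smooth:
  "L \<in> const_coeff_diff_op \<Longrightarrow> smooth_fun f \<Longrightarrow> smooth_fun (L f)"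
  by (induction arbitrary: f rule: const_coeff_diff_op.induct)
    (simp_all add: smooth_fun_partial smooth_fun_cmult smooth_fun_add)

lemma const_coeff_diff_op_add:
  "L \<in> const_coeff_diff_op \<Longrightarrow> smooth_fun f \<Longrightarrow> smooth_fun g \<Longrightarrow>
    L (\<lambda>x. f x + g x) = (\<lambda>x. L f x + L g x)"
  by (induction arbitrary: f g rule: const_coeff_diff_op.induct)
    (simp_all add: partial_add smooth_fun_imp_differentiable const_coeff_diff_op_smooth algebra_simps)

lemma const_coeff_diff_op_cmult:
  "L \<in> const_coeff_diff_op \<Longrightarrow> smooth_fun f \<Longrightarrow> L (\<lambda>x. c * f x) = (\<lambda>x. c * L f x)"
  by (induction arbitrary: f rule: const_coeff_diff_op.induct)
    (simp_all add: partial_cmult smooth_fun_imp_differentiable const_coeff_diff_op_smooth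
      smooth_fun_cmult algebra_simps)

lemma const_coeff_diff_op_zero:
  "L \<in> const_coeff_diff_op \<Longrightarrow> L (\<lambda>x::real^'n::finite. 0) = (\<lambda>x. 0)"
  using const_coeff_diff_op_cmult[OF _ smooth_fun_zero, of L 0] by simp

lemma const_coeff_diff_op_sum:
  assumes "L \<in> const_coeff_diff_op" and "\<And>p. p \<in> S \<Longrightarrow> smooth_fun (f p)"
  shows "L (\<lambda>x. \<Sum>p\<in>S. c p * f p x) = (\<lambda>x. \<Sum>p\<in>S. c p * L (f p) x)"
  using assms(2)
proof (induction S rule: infinite_finite_induct)
  case (insert a S)
  then show ?case
    by (simp add: const_coeff_diff_op_add[OF assms(1)] const_coeff_diff_op_cmult[OF assms(1)]
        smooth_fun_cmult smooth_fun_sum)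
qed (simp_all add: const_coeff_diff_op_zero assms(1))

lemma const_coeff_diff_op_partial:
  "L \<in> const_coeff_diff_op \<Longrightarrow> smooth_fun f \<Longrightarrow> L (partial i f) = partial i (L f)"
  by (induction arbitrary: f rule: const_coeff_diff_op.induct)
    (simp_all add: partial_commute partial_add partial_cmult smooth_fun_imp_differentiable
      smooth_fun_partial const_coeff_diff_op_smooth)

lemma const_coeff_diff_op_commute:
  assumes L: "L \<in> const_coeff_diff_op"
  shows "M \<in> const_coeff_diff_op \<Longrightarrow> smooth_fun f \<Longrightarrow> L (M f) = M (L f)"
  by (induction arbitrary: f rule: const_coeff_diff_op.induct)
    (simp_all add: L const_coeff_diff_op_partial const_coeff_diff_op_cmult const_coeff_diff_op_add
      const_coeff_diff_op_smooth)

lemma const_coeff_diff_op_funpow_smooth: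
  "L \<in> const_coeff_diff_op \<Longrightarrow> smooth_fun f \<Longrightarrow> smooth_fun ((L ^^ k) f)"
  by (induction k) (simp_all add: const_coeff_diff_op_smooth)

lemma const_coeff_diff_op_funpow_commute:
  assumes "L \<in> const_coeff_diff_op" and "M \<in> const_coeff_diff_op" and "smooth_fun f"
  shows "M ((L ^^ k) f) = (L ^^ k) (M f)"
  by (induction k)
    (simp_all add: assms const_coeff_diff_op_commute const_coeff_diff_op_funpow_smooth)

lemma const_coeff_diff_op_alternating_sum:
  fixes W :: "real^'n::finite \<Rightarrow> real" and n :: nat
  assumes A: "A \<in> const_coeff_diff_op" and B: "B \<in> const_coeff_diff_op" and W: "smooth_fun W"
  defines "Q \<equiv> \<lambda>x. \<Sum>p\<le>n. (-1) ^ p * (A ^^ (n - p)) ((B ^^ p) W) x"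
  shows "(\<lambda>x. A Q x + B Q x) = (\<lambda>x. (A ^^ (n + 1)) W x + (-1) ^ n * (B ^^ (n + 1)) W x)"
proof
  fix x
  define X where "X p = (A ^^ (Suc n - p)) ((B ^^ p) W)" for p
  have smooth: "smooth_fun ((A ^^ (n - p)) ((B ^^ p) W))" for p
    by (intro const_coeff_diff_op_funpow_smooth A B W)
  have A_shift: "A ((A ^^ (n - p)) ((B ^^ p) W)) = X p" if "p \<le> n" for p
    using that by (simp add: X_def Suc_diff_le)
  have B_shift: "B ((A ^^ (n - p)) ((B ^^ p) W)) = X (Suc p)" for p
    by (simp add: X_def const_coeff_diff_op_funpow_commute[OF A B] const_coeff_diff_op_funpow_smooth[OF B W])
  have "A Q x + B Q x = (\<Sum>p\<le>n. (-1) ^ p * X p x + (-1) ^ p * X (Suc p) x)"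
    unfolding Q_def const_coeff_diff_op_sum[OF A smooth] const_coeff_diff_op_sum[OF B smooth]
    by (simp add: A_shift B_shift sum.distrib)
  also have "\<dots> = (\<Sum>p\<le>n. (-1) ^ p * X p x - (-1) ^ Suc p * X (Suc p) x)"
    by simp
  also have "\<dots> = X 0 x - (-1) ^ Suc n * X (Suc n) x"
    using sum_telescope[of "\<lambda>p. (-1) ^ p * X p x"] by simp
  finally show "A Q x + B Q x = (A ^^ (n + 1)) W x + (-1) ^ n * (B ^^ (n + 1)) W x"
    by (simp add: X_def)
qed

theorem theorem4p2:
  fixes q W :: "real^'n::finite \<Rightarrow> real"
    and A B D :: "(real^'n \<Rightarrow> real) \<Rightarrow> (real^'n \<Rightarrow> real)"
    and u :: real and lam :: nat
  assumes "C1_fun q"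
    and "A \<in> const_coeff_diff_op" and "B \<in> const_coeff_diff_op" and "D \<in> const_coeff_diff_op"
    and "\<And>f. D f = (\<lambda>x. A f x + B f x)"
    and "u \<noteq> 0"
    and "smooth_fun W"
    and "(A ^^ (lam + 1)) W = q"
    and "(B ^^ (lam + 1)) W = (\<lambda>x. (-1) ^ lam * (u - 1) * q x)"
  shows "D (\<lambda>x. \<Sum>p\<le>lam. ((-1) ^ p / u) * (A ^^ (lam - p)) ((B ^^ p) W) x) = q"
proof -
  note A = assms(2) and B = assms(3) and W = assms(7)
  define Q where "Q = (\<lambda>x. \<Sum>p\<le>lam. (-1) ^ p * (A ^^ (lam - p)) ((B ^^ p) W) x)"
  have Q_smooth: "smooth_fun Q"
    unfolding Q_def by (intro smooth_fun_sum const_coeff_diff_op_funpow_smooth A B W)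
  have "(\<lambda>x. \<Sum>p\<le>lam. ((-1) ^ p / u) * (A ^^ (lam - p)) ((B ^^ p) W) x) = (\<lambda>x. 1 / u * Q x)"
    by (simp add: Q_def sum_distrib_left)
  moreover have "D (\<lambda>x. 1 / u * Q x) = (\<lambda>x. 1 / u * (A Q x + B Q x))"
    by (simp only: assms(5) const_coeff_diff_op_cmult[OF A Q_smooth] const_coeff_diff_op_cmult[OF B Q_smooth]
        distrib_left)
  moreover have "(\<lambda>x. 1 / u * (A Q x + B Q x)) = q"
  proof
    fix x
    have "A Q x + B Q x = q x + (-1) ^ lam * ((-1) ^ lam * (u - 1) * q x)"
      using fun_cong[OF const_coeff_diff_op_alternating_sum[OF A B W, of lam], of x]
      unfolding Q_def assms(8,9) .
    then show "1 / u * (A Q x + B Q x) = q x"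
      using \<open>u \<noteq> 0\<close> by (simp add: field_simps)
  qed
  ultimately show ?thesis
    by simp
qed

end
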